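(* In the arrow category $\mathrm{Arr}(\mathrm{Ab})$ of abelian groups (i.e. $\mathscr{A}^\mathbb{T}$ with $\mathscr{A}=\mathrm{Ab}$, $\mathbb{T}$ the walking arrow $1\to0$, $\mathbb{S}=\{0\}$, so that $\mathscr{F}$ consists of arrows $0\to A$ and the reflection sends $a:A_1\to A_0$ to $\mathrm{Cok}(a)$), the morphism of arrows $(f_0,f_1)$ from $1_\mathbb{Z}:\mathbb{Z}\to\mathbb{Z}$ to $\mathbb{Z}\to0$ with $f_1=1_\mathbb{Z}$ and $f_0:\mathbb{Z}\to0$ is an extension which is central but not trivial with respect to $\mathscr{F}$. Consequently the torsion class $\mathscr{T}$ of the torsion theory $(\mathscr{T},\mathscr{F})$ in $\mathrm{Arr}(\mathrm{Ab})$ is not closed under regular subobjects.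
   Context: An extension in $\mathrm{Arr}(\mathscr{A})$ from $a:A_1\to A_0$ to $b:B_1\to B_0$ is a commutative square $(f_0,f_1)$ with $f_0,f_1$ regular epimorphisms. It is trivial if the naturality square of the unit of the reflection into $\mathscr{F}$ is a pullback; central if its pullback along some regular epimorphism $p$ is trivial. $\mathscr{T}$ consists of the arrows $a:A_1\to A_0$ that are epimorphisms (the torsion class of the torsion theory whose torsion-free class is $\mathscr{F}$). *)

theory Defs
  imports "HOL-Algebra.Elementary_Groups" "HOL-Algebra.Coset"
begin

definition arr_obj :: "('a,'x) monoid_scheme \<Rightarrow> ('b,'y) monoid_scheme \<Rightarrow> ('a \<Rightarrow> 'b) \<Rightarrow> bool" where
  "arr_obj A1 A0 a \<longleftrightarrow> comm_group A1 \<and> comm_group A0 \<and> a \<in> hom A1 A0"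

definition arr_mor ::
  "('a,'x) monoid_scheme \<Rightarrow> ('b,'y) monoid_scheme \<Rightarrow> ('a \<Rightarrow> 'b) \<Rightarrow>
   ('c,'z) monoid_scheme \<Rightarrow> ('d,'w) monoid_scheme \<Rightarrow> ('c \<Rightarrow> 'd) \<Rightarrow>
   ('a \<Rightarrow> 'c) \<Rightarrow> ('b \<Rightarrow> 'd) \<Rightarrow> bool" where
  "arr_mor A1 A0 a B1 B0 b f1 f0 \<longleftrightarrow>
     arr_obj A1 A0 a \<and> arr_obj B1 B0 b \<and> f1 \<in> hom A1 B1 \<and> f0 \<in> hom A0 B0 \<and>
     (\<forall>x\<in>carrier A1. b (f1 x) = f0 (a x))"

definition ab_regular_epi :: "('a,'x) monoid_scheme \<Rightarrow> ('b,'y) monoid_scheme \<Rightarrow> ('a \<Rightarrow> 'b) \<Rightarrow> bool" where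
  "ab_regular_epi A B f \<longleftrightarrow> f \<in> hom A B \<and> f ` carrier A = carrier B"

definition ab_regular_mono :: "('a,'x) monoid_scheme \<Rightarrow> ('b,'y) monoid_scheme \<Rightarrow> ('a \<Rightarrow> 'b) \<Rightarrow> bool" where
  "ab_regular_mono A B f \<longleftrightarrow> f \<in> hom A B \<and> inj_on f (carrier A)"

definition extension ::
  "('a,'x) monoid_scheme \<Rightarrow> ('b,'y) monoid_scheme \<Rightarrow> ('a \<Rightarrow> 'b) \<Rightarrow>
   ('c,'z) monoid_scheme \<Rightarrow> ('d,'w) monoid_scheme \<Rightarrow> ('c \<Rightarrow> 'd) \<Rightarrow>
   ('a \<Rightarrow> 'c) \<Rightarrow> ('b \<Rightarrow> 'd) \<Rightarrow> bool" where
  "extension A1 A0 a B1 B0 b f1 f0 \<longleftrightarrow>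
     arr_mor A1 A0 a B1 B0 b f1 f0 \<and> ab_regular_epi A1 B1 f1 \<and> ab_regular_epi A0 B0 f0"

text \<open>Regular monomorphism (regular subobject) in Arr(Ab): a morphism of arrows whose
  components are regular monos (limits, hence regular monos, in Arr(Ab) are componentwise).\<close>

definition arr_regular_mono ::
  "('a,'x) monoid_scheme \<Rightarrow> ('b,'y) monoid_scheme \<Rightarrow> ('a \<Rightarrow> 'b) \<Rightarrow>
   ('c,'z) monoid_scheme \<Rightarrow> ('d,'w) monoid_scheme \<Rightarrow> ('c \<Rightarrow> 'd) \<Rightarrow>
   ('a \<Rightarrow> 'c) \<Rightarrow> ('b \<Rightarrow> 'd) \<Rightarrow> bool" where
  "arr_regular_mono A1 A0 a B1 B0 b f1 f0 \<longleftrightarrow>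
     arr_mor A1 A0 a B1 B0 b f1 f0 \<and> ab_regular_mono A1 B1 f1 \<and> ab_regular_mono A0 B0 f0"

definition ab_pullback_square ::
  "('p,'s) monoid_scheme \<Rightarrow> ('x,'t) monoid_scheme \<Rightarrow> ('y,'u) monoid_scheme \<Rightarrow> ('z,'v) monoid_scheme \<Rightarrow>
   ('p \<Rightarrow> 'x) \<Rightarrow> ('p \<Rightarrow> 'y) \<Rightarrow> ('x \<Rightarrow> 'z) \<Rightarrow> ('y \<Rightarrow> 'z) \<Rightarrow> bool" where
  "ab_pullback_square P X Y Z p1 p2 g h \<longleftrightarrow>
     (\<forall>w\<in>carrier P. g (p1 w) = h (p2 w)) \<and>
     bij_betw (\<lambda>w. (p1 w, p2 w)) (carrier P)
        {(u, v). u \<in> carrier X \<and> v \<in> carrier Y \<and> g u = h v}"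

definition ab_pb :: "('a,'x) monoid_scheme \<Rightarrow> ('e,'y) monoid_scheme \<Rightarrow> ('a \<Rightarrow> 'c) \<Rightarrow> ('e \<Rightarrow> 'c)
                     \<Rightarrow> ('a \<times> 'e) monoid" where
  "ab_pb A E f p =
     \<lparr> carrier = {(u, v). u \<in> carrier A \<and> v \<in> carrier E \<and> f u = p v},
       monoid.mult = (\<lambda>(u, v) (u', v'). (u \<otimes>\<^bsub>A\<^esub> u', v \<otimes>\<^bsub>E\<^esub> v')),
       one = (\<one>\<^bsub>A\<^esub>, \<one>\<^bsub>E\<^esub>) \<rparr>"

definition zero_grp :: "unit monoid" where
  "zero_grp = \<lparr> carrier = {()}, monoid.mult = (\<lambda>_ _. ()), one = () \<rparr>"

text \<open>Cok(a) = A0 / Im a, with quotient map (level-0 component of the unit \<eta>_A);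
  level-1 component of the unit is A1 \<rightarrow> 0. The object I(A) is the arrow 0 \<rightarrow> Cok a.\<close>

definition cok :: "('a,'x) monoid_scheme \<Rightarrow> ('b,'y) monoid_scheme \<Rightarrow> ('a \<Rightarrow> 'b) \<Rightarrow> ('b set) monoid" where
  "cok A1 A0 a = A0 Mod (a ` carrier A1)"

definition cok_quot :: "('a,'x) monoid_scheme \<Rightarrow> ('b,'y) monoid_scheme \<Rightarrow> ('a \<Rightarrow> 'b) \<Rightarrow> 'b \<Rightarrow> 'b set" where
  "cok_quot A1 A0 a y = (a ` carrier A1) #>\<^bsub>A0\<^esub> y"

definition refl_arrow :: "('a,'x) monoid_scheme \<Rightarrow> ('b,'y) monoid_scheme \<Rightarrow> ('a \<Rightarrow> 'b) \<Rightarrow> unit \<Rightarrow> 'b set" where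
  "refl_arrow A1 A0 a = (\<lambda>_. \<one>\<^bsub>cok A1 A0 a\<^esub>)"

text \<open>I(f) at level 0: Cok a \<rightarrow> Cok b, the coset C \<mapsto> Im b \<cdot> f0(C) (= [f0 x] for x \<in> C).\<close>

definition cok_map ::
  "('c,'z) monoid_scheme \<Rightarrow> ('d,'w) monoid_scheme \<Rightarrow> ('c \<Rightarrow> 'd) \<Rightarrow> ('b \<Rightarrow> 'd) \<Rightarrow> 'b set \<Rightarrow> 'd set" where
  "cok_map B1 B0 b f0 C = (b ` carrier B1) <#>\<^bsub>B0\<^esub> (f0 ` C)"

text \<open>Trivial extension: the naturality square of the unit,
     A --\<eta>_A--> I(A)
     |f           |I(f)
     B --\<eta>_B--> I(B)
  is a pullback in Arr(Ab), i.e. levelwise a pullback in Ab.\<close>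

definition trivial_ext ::
  "('a,'x) monoid_scheme \<Rightarrow> ('b,'y) monoid_scheme \<Rightarrow> ('a \<Rightarrow> 'b) \<Rightarrow>
   ('c,'z) monoid_scheme \<Rightarrow> ('d,'w) monoid_scheme \<Rightarrow> ('c \<Rightarrow> 'd) \<Rightarrow>
   ('a \<Rightarrow> 'c) \<Rightarrow> ('b \<Rightarrow> 'd) \<Rightarrow> bool" where
  "trivial_ext A1 A0 a B1 B0 b f1 f0 \<longleftrightarrow>
     extension A1 A0 a B1 B0 b f1 f0 \<and>
     ab_pullback_square A1 zero_grp B1 zero_grp (\<lambda>_. ()) f1 (\<lambda>_. ()) (\<lambda>_. ()) \<and>
     ab_pullback_square A0 (cok A1 A0 a) B0 (cok B1 B0 b)
        (cok_quot A1 A0 a) f0 (cok_map B1 B0 b f0) (cok_quot B1 B0 b)"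

text \<open>Since HOL cannot quantify over types inside a formula,
  the element types of E are fixed by the TYPE argument.\<close>

definition central_ext ::
  "'e1 itself \<Rightarrow> 'e0 itself \<Rightarrow>
   ('a,'x) monoid_scheme \<Rightarrow> ('b,'y) monoid_scheme \<Rightarrow> ('a \<Rightarrow> 'b) \<Rightarrow>
   ('c,'z) monoid_scheme \<Rightarrow> ('d,'w) monoid_scheme \<Rightarrow> ('c \<Rightarrow> 'd) \<Rightarrow>
   ('a \<Rightarrow> 'c) \<Rightarrow> ('b \<Rightarrow> 'd) \<Rightarrow> bool" where
  "central_ext (_ :: 'e1 itself) (_ :: 'e0 itself) A1 A0 a B1 B0 b f1 f0 \<longleftrightarrow>
     extension A1 A0 a B1 B0 b f1 f0 \<and>
     (\<exists>(E1 :: 'e1 monoid) (E0 :: 'e0 monoid) e p1 p0.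
        extension E1 E0 e B1 B0 b p1 p0 \<and>
        trivial_ext (ab_pb A1 E1 f1 p1) (ab_pb A0 E0 f0 p0) (\<lambda>(u, v). (a u, e v))
                    E1 E0 e snd snd)"

definition in_T :: "('a,'x) monoid_scheme \<Rightarrow> ('b,'y) monoid_scheme \<Rightarrow> ('a \<Rightarrow> 'b) \<Rightarrow> bool" where
  "in_T A1 A0 a \<longleftrightarrow> arr_obj A1 A0 a \<and> a ` carrier A1 = carrier A0"

definition zero_int_group :: "int monoid" where
  "zero_int_group = \<lparr> carrier = {0}, monoid.mult = (+), one = 0 \<rparr>"

end

theory Submission
  imports Defs
begin

(* The extension f = (1_Z, 0) from 1_Z to Z -> 0 is not trivial: its domain 1_Z lies in T, so
   Cok(1_Z) = 0 and the level-0 naturality square can only be a pullback if f0 : Z -> 0 is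
   injective.  Pulled back along itself it becomes trivial: the pullback is the kernel pair, i.e.
   the diagonal inclusion Delta -> Z x Z, whose level-1 projection Delta -> Z is bijective and
   whose level-0 square is a pullback because (x, y) |-> (Delta + (x, y), y) is a bijection
   Z x Z -> (Z x Z)/Delta x Z.  Finally 0 -> Z is a regular subobject of 1_Z in T that is not in T.
   None of this uses more about Z than that it is a nontrivial abelian group. *)

lemma comm_group_zero_int_group: "comm_group zero_int_group"
  unfolding zero_int_group_def by (rule comm_groupI) auto

lemma carrier_zero_int_group [simp]: "carrier zero_int_group = {0}"
  and one_zero_int_group [simp]: "\<one>\<^bsub>zero_int_group\<^esub> = 0"
  by (simp_all add: zero_int_group_def)

lemma ab_pb_const: "ab_pb A E (\<lambda>_. z) (\<lambda>_. z) = A \<times>\<times> E"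
  by (auto simp: ab_pb_def DirProd_def)

lemma carrier_ab_pb: "carrier (ab_pb A E f p) = {(u, v). u \<in> carrier A \<and> v \<in> carrier E \<and> f u = p v}"
  by (simp add: ab_pb_def)

lemma comm_group_ab_pb:
  assumes A: "comm_group A" and E: "comm_group E" and C: "group C"
    and f: "f \<in> hom A C" and p: "p \<in> hom E C"
  shows "comm_group (ab_pb A E f p)"
proof -
  interpret A: comm_group A by (fact A)
  interpret E: comm_group E by (fact E)
  interpret f: group_hom A C f by (simp add: group_hom_def group_hom_axioms_def A.is_group C f)
  interpret p: group_hom E C p by (simp add: group_hom_def group_hom_axioms_def E.is_group C p)
  show ?thesis
  proof (rule comm_groupI)
    fix w assume "w \<in> carrier (ab_pb A E f p)"
    then show "\<exists>w'\<in>carrier (ab_pb A E f p). w' \<otimes>\<^bsub>ab_pb A E f p\<^esub> w = \<one>\<^bsub>ab_pb A E f p\<^esub>"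
      by (intro bexI[of _ "(inv\<^bsub>A\<^esub> fst w, inv\<^bsub>E\<^esub> snd w)"]) (auto simp: ab_pb_def)
  qed (auto simp: ab_pb_def A.m_ac E.m_ac)
qed

lemma (in comm_group) bij_betw_diagonal_rcosets:
  defines "\<Delta> \<equiv> {(u, v). u \<in> carrier G \<and> v \<in> carrier G \<and> u = v}"
  shows "bij_betw (\<lambda>w. (\<Delta> #>\<^bsub>G \<times>\<times> G\<^esub> w, snd w)) (carrier G \<times> carrier G)
           ((rcosets\<^bsub>G \<times>\<times> G\<^esub> \<Delta>) \<times> carrier G)"
proof -
  interpret P: group "G \<times>\<times> G"
    by (simp add: DirProd_group is_group)
  have \<Delta>: "subgroup \<Delta> (G \<times>\<times> G)"
    by (rule P.subgroupI) (auto simp: \<Delta>_def)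
  have translate: "(h \<otimes> x, h \<otimes> y) \<in> \<Delta> #>\<^bsub>G \<times>\<times> G\<^esub> (x, y)"
    if "h \<in> carrier G" "x \<in> carrier G" "y \<in> carrier G" for h x y
    using that P.rcosI[of "(h, h)" \<Delta> "(x, y)"] by (auto simp: \<Delta>_def)
  show ?thesis
    unfolding bij_betw_def
  proof
    show "inj_on (\<lambda>w. (\<Delta> #>\<^bsub>G \<times>\<times> G\<^esub> w, snd w)) (carrier G \<times> carrier G)"
    proof (rule inj_onI)
      fix w w'
      assume w: "w \<in> carrier G \<times> carrier G" and w': "w' \<in> carrier G \<times> carrier G"
        and eq: "(\<Delta> #>\<^bsub>G \<times>\<times> G\<^esub> w, snd w) = (\<Delta> #>\<^bsub>G \<times>\<times> G\<^esub> w', snd w')"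
      then have "w \<in> \<Delta> #>\<^bsub>G \<times>\<times> G\<^esub> w'"
        using P.rcos_self[OF _ \<Delta>] by auto
      then obtain h where h: "h \<in> carrier G" "w = (h \<otimes> fst w', h \<otimes> snd w')"
        by (auto simp: r_coset_def \<Delta>_def mult_DirProd')
      with eq w' have "h = \<one>"
        by auto
      with h w' show "w = w'"
        by (simp add: mem_Times_iff prod_eq_iff)
    qed
    show "(\<lambda>w. (\<Delta> #>\<^bsub>G \<times>\<times> G\<^esub> w, snd w)) ` (carrier G \<times> carrier G) = (rcosets\<^bsub>G \<times>\<times> G\<^esub> \<Delta>) \<times> carrier G"
    proof (intro equalityI subsetI)
      fix z assume "z \<in> (\<lambda>w. (\<Delta> #>\<^bsub>G \<times>\<times> G\<^esub> w, snd w)) ` (carrier G \<times> carrier G)"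
      then show "z \<in> (rcosets\<^bsub>G \<times>\<times> G\<^esub> \<Delta>) \<times> carrier G"
        using P.rcosetsI[of \<Delta>] subgroup.subset[OF \<Delta>] by auto
    next
      fix z assume "z \<in> (rcosets\<^bsub>G \<times>\<times> G\<^esub> \<Delta>) \<times> carrier G"
      then obtain x y v where xy: "x \<in> carrier G" "y \<in> carrier G" and v: "v \<in> carrier G"
        and z: "z = (\<Delta> #>\<^bsub>G \<times>\<times> G\<^esub> (x, y), v)"
        by (auto simp: RCOSETS_def)
      define h where "h = v \<otimes> inv y"
      have h: "h \<in> carrier G" "h \<otimes> y = v"
        using xy v by (simp_all add: h_def m_assoc)
      then have "\<Delta> #>\<^bsub>G \<times>\<times> G\<^esub> (x, y) = \<Delta> #>\<^bsub>G \<times>\<times> G\<^esub> (h \<otimes> x, v)"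
        using P.repr_independence[OF translate[OF h(1) xy] _ \<Delta>] xy by simp
      with h xy show "z \<in> (\<lambda>w. (\<Delta> #>\<^bsub>G \<times>\<times> G\<^esub> w, snd w)) ` (carrier G \<times> carrier G)"
        unfolding z by (auto intro!: image_eqI[of _ _ "(h \<otimes> x, v)"])
    qed
  qed
qed

lemma carrier_cok: "carrier (cok A1 A0 a) = cok_quot A1 A0 a ` carrier A0"
  by (simp add: cok_def cok_quot_def carrier_FactGroup)

lemma cok_quot_in_T:
  assumes "in_T A1 A0 a" "y \<in> carrier A0"
  shows "cok_quot A1 A0 a y = carrier A0"
proof -
  have "group A0" using assms(1) by (simp add: in_T_def arr_obj_def comm_group_def)
  then show ?thesis
    using assms group.coset_join2[OF _ _ group.subgroup_self] by (simp add: in_T_def cok_quot_def)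
qed

lemma cok_map_into_T:
  assumes "in_T B1 B0 b" "f0 ` C \<subseteq> carrier B0" "c \<in> C"
  shows "cok_map B1 B0 b f0 C = carrier B0"
proof -
  interpret B0: comm_group B0 using assms(1) by (simp add: in_T_def arr_obj_def)
  have fc: "f0 c \<in> carrier B0" using assms(2,3) by blast
  have "x \<in> carrier B0 <#>\<^bsub>B0\<^esub> f0 ` C" if "x \<in> carrier B0" for x
  proof -
    have "x = (x \<otimes>\<^bsub>B0\<^esub> inv\<^bsub>B0\<^esub> f0 c) \<otimes>\<^bsub>B0\<^esub> f0 c"
      using that fc by (simp add: B0.m_assoc)
    then show ?thesis
      using that fc assms(3) unfolding set_mult_def by (auto intro!: bexI[of _ c])
  qed
  moreover have "carrier B0 <#>\<^bsub>B0\<^esub> f0 ` C \<subseteq> carrier B0"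
    using assms(2) B0.set_mult_closed by blast
  ultimately show ?thesis
    using assms(1) unfolding cok_map_def in_T_def by auto
qed

lemma trivial_ext_in_T_inj_on:
  assumes "trivial_ext A1 A0 a B1 B0 b f1 f0" "in_T A1 A0 a"
  shows "inj_on f0 (carrier A0)"
proof -
  have "inj_on (\<lambda>w. (cok_quot A1 A0 a w, f0 w)) (carrier A0)"
    using assms(1) by (simp add: trivial_ext_def ab_pullback_square_def bij_betw_def)
  then show ?thesis
    using cok_quot_in_T[OF assms(2)] by (simp add: inj_on_def)
qed

(* The reflection is 0 at level 1, and Cok b = 0 at level 0 because b is epi; so the two pullback
   conditions reduce to bij1 and bij0. *)
lemma trivial_ext_into_T_I:
  assumes ext: "extension A1 A0 a B1 B0 b f1 f0" and B: "in_T B1 B0 b"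
    and bij1: "bij_betw f1 (carrier A1) (carrier B1)"
    and bij0: "bij_betw (\<lambda>w. (cok_quot A1 A0 a w, f0 w)) (carrier A0)
                 (carrier (cok A1 A0 a) \<times> carrier B0)"
  shows "trivial_ext A1 A0 a B1 B0 b f1 f0"
proof -
  have A1: "group A1" and A0: "group A0" and a: "a \<in> hom A1 A0" and f0: "f0 \<in> hom A0 B0"
    using ext by (auto simp: extension_def arr_mor_def arr_obj_def comm_group_def)
  have cok_map_quot: "cok_map B1 B0 b f0 (cok_quot A1 A0 a w) = carrier B0"
    if w: "w \<in> carrier A0" for w
  proof (rule cok_map_into_T[OF B])
    have "a \<one>\<^bsub>A1\<^esub> \<otimes>\<^bsub>A0\<^esub> w = w"
      using a A1 A0 w by (simp add: hom_one group.is_monoid monoid.l_one)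
    then show "w \<in> cok_quot A1 A0 a w"
      using A1 unfolding cok_quot_def r_coset_def
      by (metis UN_iff group.is_monoid image_eqI monoid.one_closed singletonI)
    have "cok_quot A1 A0 a w \<subseteq> carrier A0"
      using monoid.r_coset_subset_G[OF group.is_monoid[OF A0]] w a
      unfolding cok_quot_def hom_def by blast
    then show "f0 ` cok_quot A1 A0 a w \<subseteq> carrier B0"
      using f0 by (auto simp: hom_def)
  qed
  have "ab_pullback_square A0 (cok A1 A0 a) B0 (cok B1 B0 b)
          (cok_quot A1 A0 a) f0 (cok_map B1 B0 b f0) (cok_quot B1 B0 b)"
    unfolding ab_pullback_square_def
  proof
    show "\<forall>w\<in>carrier A0. cok_map B1 B0 b f0 (cok_quot A1 A0 a w) = cok_quot B1 B0 b (f0 w)"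
      using cok_map_quot cok_quot_in_T[OF B] f0 by (simp add: hom_def Pi_iff)
    have "{(u, v). u \<in> carrier (cok A1 A0 a) \<and> v \<in> carrier B0 \<and>
             cok_map B1 B0 b f0 u = cok_quot B1 B0 b v} = carrier (cok A1 A0 a) \<times> carrier B0"
      using cok_map_quot cok_quot_in_T[OF B] by (auto simp: carrier_cok)
    then show "bij_betw (\<lambda>w. (cok_quot A1 A0 a w, f0 w)) (carrier A0)
      {(u, v). u \<in> carrier (cok A1 A0 a) \<and> v \<in> carrier B0 \<and>
               cok_map B1 B0 b f0 u = cok_quot B1 B0 b v}"
      using bij0 by simp
  qed
  moreover have "ab_pullback_square A1 zero_grp B1 zero_grp (\<lambda>_. ()) f1 (\<lambda>_. ()) (\<lambda>_. ())"
    using bij1 by (auto simp: ab_pullback_square_def zero_grp_def bij_betw_def inj_on_def)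
  ultimately show ?thesis
    using ext by (simp add: trivial_ext_def)
qed

lemma in_T_id: "comm_group G \<Longrightarrow> in_T G G id"
  by (auto simp: in_T_def arr_obj_def intro!: homI)

lemma extension_id_to_trivial:
  assumes "comm_group G" "comm_group Z" "carrier Z = {\<one>\<^bsub>Z\<^esub>}"
  shows "extension G G id G Z (\<lambda>_. \<one>\<^bsub>Z\<^esub>) id (\<lambda>_. \<one>\<^bsub>Z\<^esub>)"
proof -
  interpret G: comm_group G by fact
  interpret Z: comm_group Z by fact
  show ?thesis
    using assms G.one_closed
    by (auto simp: extension_def arr_mor_def arr_obj_def ab_regular_epi_def intro!: homI)
qed

lemma not_trivial_ext_const:
  assumes "comm_group A" "carrier A \<noteq> {\<one>\<^bsub>A\<^esub>}"
  shows "\<not> trivial_ext A A id B1 B0 b f1 (\<lambda>_. z)"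
proof
  assume "trivial_ext A A id B1 B0 b f1 (\<lambda>_. z)"
  then have "inj_on (\<lambda>_. z) (carrier A)"
    using trivial_ext_in_T_inj_on in_T_id[OF assms(1)] by blast
  moreover have "\<one>\<^bsub>A\<^esub> \<in> carrier A"
    using assms(1) by (simp add: comm_group_def group.is_monoid monoid.one_closed)
  ultimately show False
    using assms(2) by (auto simp: inj_on_def)
qed

lemma central_ext_id_to_trivial:
  fixes G :: "'a monoid"
  assumes G: "comm_group G" and Z: "comm_group Z" "carrier Z = {\<one>\<^bsub>Z\<^esub>}"
  shows "central_ext TYPE('a) TYPE('a) G G id G Z (\<lambda>_. \<one>\<^bsub>Z\<^esub>) id (\<lambda>_. \<one>\<^bsub>Z\<^esub>)"
proof -
  interpret G: comm_group G by (fact G)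
  define D where "D = ab_pb G G (id :: 'a \<Rightarrow> 'a) id"
  define d where "d = (\<lambda>(u :: 'a, v :: 'a). (id u, id v))"
  define \<Delta> where "\<Delta> = {(u, v). u \<in> carrier G \<and> v \<in> carrier G \<and> u = v}"
  have carrier_D: "carrier D = \<Delta>" and d_image: "d ` carrier D = \<Delta>"
    by (auto simp: D_def d_def \<Delta>_def carrier_ab_pb)
  have ext: "extension G G id G Z (\<lambda>_. \<one>\<^bsub>Z\<^esub>) id (\<lambda>_. \<one>\<^bsub>Z\<^esub>)"
    by (rule extension_id_to_trivial[OF G Z])
  have id_hom: "id \<in> hom G G" and zero_hom: "(\<lambda>_. \<one>\<^bsub>Z\<^esub>) \<in> hom G Z"
    using ext by (simp_all add: extension_def arr_mor_def)
  have "comm_group (G \<times>\<times> G)"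
    using comm_group_ab_pb[OF G G comm_group.axioms(2)[OF Z(1)] zero_hom zero_hom]
    by (simp add: ab_pb_const)
  moreover have "comm_group D"
    unfolding D_def by (rule comm_group_ab_pb[OF G G G.is_group id_hom id_hom])
  ultimately have kernel_pair_ext: "extension D (G \<times>\<times> G) d G G id snd snd"
    using G carrier_D \<Delta>_def
    by (auto simp: extension_def arr_mor_def arr_obj_def ab_regular_epi_def d_def D_def
             ab_pb_def image_iff intro!: homI)
  have "bij_betw snd (carrier D) (carrier G)"
    by (auto simp: carrier_D \<Delta>_def bij_betw_def inj_on_def image_iff)
  moreover have "bij_betw (\<lambda>w. (cok_quot D (G \<times>\<times> G) d w, snd w)) (carrier (G \<times>\<times> G))
                   (carrier (cok D (G \<times>\<times> G) d) \<times> carrier G)"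
    using G.bij_betw_diagonal_rcosets
    by (simp add: cok_quot_def cok_def d_image \<Delta>_def FactGroup_def)
  ultimately have "trivial_ext D (G \<times>\<times> G) d G G id snd snd"
    by (rule trivial_ext_into_T_I[OF kernel_pair_ext in_T_id[OF G]])
  then show ?thesis
    unfolding central_ext_def using ext
    by (intro conjI exI[of _ G] exI[of _ id] exI[of _ "\<lambda>_. \<one>\<^bsub>Z\<^esub>"])
       (simp_all add: ab_pb_const D_def d_def)
qed
lemma arr_regular_mono_trivial_to_id:
  assumes "comm_group G" "comm_group Z" "carrier Z = {\<one>\<^bsub>Z\<^esub>}"
  shows "arr_regular_mono Z G (\<lambda>_. \<one>\<^bsub>G\<^esub>) G G id (\<lambda>_. \<one>\<^bsub>G\<^esub>) id"
proof -
  interpret G: comm_group G by fact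
  show ?thesis
    using assms
    by (auto simp: arr_regular_mono_def arr_mor_def arr_obj_def ab_regular_mono_def intro!: homI)
qed

lemma not_in_T_const:
  assumes "carrier G \<noteq> {\<one>\<^bsub>G\<^esub>}"
  shows "\<not> in_T Z G (\<lambda>_. \<one>\<^bsub>G\<^esub>)"
  using assms by (auto simp: in_T_def arr_obj_def comm_group_def group.is_monoid monoid.one_closed)

theorem mainTheorem5:
  shows "extension integer_group integer_group id integer_group zero_int_group (\<lambda>_. 0) id (\<lambda>_. 0)
       \<and> central_ext TYPE(int) TYPE(int)
           integer_group integer_group id integer_group zero_int_group (\<lambda>_. 0) id (\<lambda>_. 0)
       \<and> \<not> trivial_ext integer_group integer_group id integer_group zero_int_group (\<lambda>_. 0) id (\<lambda>_. 0)
       \<and> (\<exists>(X1 :: int monoid) (X0 :: int monoid) x (S1 :: int monoid) (S0 :: int monoid) s m1 m0.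
             in_T X1 X0 x \<and> arr_regular_mono S1 S0 s X1 X0 x m1 m0 \<and> \<not> in_T S1 S0 s)"
proof -
  note integers = abelian_integer_group
  note zero = comm_group_zero_int_group carrier_zero_int_group[folded one_zero_int_group]
  have nontrivial: "carrier integer_group \<noteq> {\<one>\<^bsub>integer_group\<^esub>}"
    by (auto simp: set_eq_iff intro!: exI[of _ 1])
  show ?thesis
  proof (intro conjI exI)
    show "extension integer_group integer_group id integer_group zero_int_group (\<lambda>_. 0) id (\<lambda>_. 0)"
      using extension_id_to_trivial[OF integers zero] by simp
    show "central_ext TYPE(int) TYPE(int)
            integer_group integer_group id integer_group zero_int_group (\<lambda>_. 0) id (\<lambda>_. 0)"
      using central_ext_id_to_trivial[OF integers zero] by simp
    show "\<not> trivial_ext integer_group integer_group id integer_group zero_int_group (\<lambda>_. 0) id (\<lambda>_. 0)"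
      by (rule not_trivial_ext_const[OF integers nontrivial])
    show "in_T integer_group integer_group id"
      by (rule in_T_id[OF integers])
    show "arr_regular_mono zero_int_group integer_group (\<lambda>_. 0) integer_group integer_group id (\<lambda>_. 0) id"
      using arr_regular_mono_trivial_to_id[OF integers zero] by simp
    show "\<not> in_T zero_int_group integer_group (\<lambda>_. 0)"
      using not_in_T_const[OF nontrivial] by simp
  qed
qed

end
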